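(* Let $(X,d)$ be a complete metric space, $N\in\mathbb{N}\setminus\{0\}$, $\alpha:(X\times X)\times(X\times X)\rightarrow[0,+\infty)$ an $N$--transitive mapping on $X\times X$, and $F:X\times X\rightarrow X$ such that for every $\varepsilon>0$ there exists $\delta(\varepsilon)>0$ for which, for all $(x,y),(u,v)\in X\times X$, \[ \varepsilon\leq\tfrac{d(x,u)+d(y,v)}{2}<\varepsilon+\delta(\varepsilon)\Rightarrow\alpha((x,y),(u,v))\,d(F(x,y),F(u,v))<\varepsilon. \] Suppose that: (B1) for all $(x,y),(u,v)\in X\times X$, $\alpha((x,y),(u,v))\geq1$ implies $\alpha((F(x,y),F(y,x)),(F(u,v),F(v,u)))\geq1$; (B2) there exists $(x_{0},y_{0})\in X\times X$ such that $\alpha((x_{0},y_{0}),(F(x_{0},y_{0}),F(y_{0},x_{0})))\geq1$ and $\alpha((F(y_{0},x_{0}),F(x_{0},y_{0})),(y_{0},x_{0}))\geq1$; and at least one of: (B3) $F$ is continuous; or (B4) for every sequence $\{(x_{n},y_{n})\}$ in $X\times X$ with $x_{n}\rightarrow x$, $y_{n}\rightarrow y$ and $\alpha((x_{n},y_{n}),(x_{n+1},y_{n+1}))\geq1$, $\alpha((y_{n+1},x_{n+1}),(y_{n},x_{n}))\geq1$ for all $n$, there is a subsequence with $\alpha((x_{n(k)},y_{n(k)}),(x,y))\geq1$ and $\alpha((y,x),(y_{n(k)},x_{n(k)}))\geq1$ for all $k$. Assume further (B5): $X\times X$ is $\beta$--connected, where $\beta((x,y),(u,v))=\min\{\alpha((x,y),(u,v)),\alpha((v,u),(y,x))\}$.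 Then $F$ has a unique coupled fixed point, this coupled fixed point is of the form $(x^{\ast},x^{\ast})$, $x^{\ast}$ is the unique fixed point of $F$ (i.e., the unique $x$ with $F(x,x)=x$), and $F^{n}(x,y)\rightarrow x^{\ast}$ as $n\rightarrow\infty$ for all $x,y\in X$.
   Context: $\mathbb{N}$ is the set of non-negative integers. For a set $Z$ and $\gamma:Z\times Z\rightarrow[0,+\infty)$, $\gamma$ is $N$--transitive if for all $z_0,\dots,z_{N+1}\in Z$ with $\gamma(z_i,z_{i+1})\geq1$ for all $i\in\{0,\dots,N\}$ one has $\gamma(z_0,z_{N+1})\geq1$. A $\gamma$--chain from $z$ to $w$ is a tuple $(z_0,\dots,z_n)$ with $z_0=z$, $z_n=w$ and, for each $i$, $\gamma(z_{i-1},z_i)\geq1$ or $\gamma(z_i,z_{i-1})\geq1$; $Z$ is $\gamma$--connected if for all $z\neq w$ in $Z$ there is a $\gamma$--chain from $z$ to $w$. A coupled fixed point of $F$ is $(x,y)$ with $F(x,y)=x$, $F(y,x)=y$. Iterates of $F$: for $G,H:X\times X\to X$ define the symmetric composition $(G\ast H)(x,y)=G(H(x,y),H(y,x))$; set $F^{0}(x,y)=x$ and $F^{n+1}=F\ast F^{n}$. *)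

theory Defs
  imports "HOL-Analysis.Analysis"
begin

definition N_transitive :: "nat \<Rightarrow> ('z \<Rightarrow> 'z \<Rightarrow> real) \<Rightarrow> bool" where
  "N_transitive N \<gamma> \<longleftrightarrow>
     (\<forall>z :: nat \<Rightarrow> 'z. (\<forall>i\<le>N. \<gamma> (z i) (z (Suc i)) \<ge> 1) \<longrightarrow> \<gamma> (z 0) (z (N + 1)) \<ge> 1)"

definition gamma_chain :: "('z \<Rightarrow> 'z \<Rightarrow> real) \<Rightarrow> 'z \<Rightarrow> 'z \<Rightarrow> nat \<Rightarrow> (nat \<Rightarrow> 'z) \<Rightarrow> bool" where
  "gamma_chain \<gamma> z w n c \<longleftrightarrow> c 0 = z \<and> c n = w \<and>
     (\<forall>i\<in>{1..n}. \<gamma> (c (i - 1)) (c i) \<ge> 1 \<or> \<gamma> (c i) (c (i - 1)) \<ge> 1)"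

definition gamma_connected :: "('z \<Rightarrow> 'z \<Rightarrow> real) \<Rightarrow> bool" where
  "gamma_connected \<gamma> \<longleftrightarrow> (\<forall>z w. z \<noteq> w \<longrightarrow> (\<exists>n c. gamma_chain \<gamma> z w n c))"

definition coupled_fixed_point :: "('a \<Rightarrow> 'a \<Rightarrow> 'a) \<Rightarrow> 'a \<Rightarrow> 'a \<Rightarrow> bool" where
  "coupled_fixed_point F x y \<longleftrightarrow> F x y = x \<and> F y x = y"

fun F_iter :: "('a \<Rightarrow> 'a \<Rightarrow> 'a) \<Rightarrow> nat \<Rightarrow> 'a \<Rightarrow> 'a \<Rightarrow> 'a" where
  "F_iter F 0 x y = x"
| "F_iter F (Suc n) x y = F (F_iter F n x y) (F_iter F n y x)"

end

theory Submission
  imports Defs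
begin

text \<open>
  On pairs, \<open>F\<close> induces the map \<open>(x, y) \<mapsto> (F x y, F y x)\<close>, which is a Meir--Keeler type
  contraction for the average distance, admissible for
  \<open>\<beta>(p, q) = min (\<alpha> p q) (\<alpha> (swap q) (swap p))\<close>, and \<open>\<beta>\<close> inherits \<open>N\<close>-transitivity.
  Iterates of admissible pairs approach each other, so the orbit of the admissible starting
  point from (B2) has consecutive terms getting close; \<open>N\<close>-transitivity makes the terms at
  distance \<open>1 + kN\<close> admissible, which lets the Meir--Keeler condition bound all their
  distances at once, so the orbit is Cauchy. Its limit is a fixed point by (B3) or (B4).
  By \<open>\<beta>\<close>-connectedness every orbit is asymptotic to that fixed point, giving uniqueness
  and global convergence; as the swap of a coupled fixed point is again one, it lies on
  the diagonal.
\<close>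

section \<open>Admissible Meir--Keeler contractions\<close>

locale alpha_meir_keeler =
  fixes T :: "'b \<Rightarrow> 'b" and g :: "'b \<Rightarrow> 'b \<Rightarrow> real" and r :: "'b \<Rightarrow> 'b \<Rightarrow> real"
    and N :: nat
  assumes r_sym: "r p q = r q p"
    and r_triangle: "r p s \<le> r p q + r q s"
    and r_eq_0_iff: "r p q = 0 \<longleftrightarrow> p = q"
    and admissible: "1 \<le> g p q \<Longrightarrow> 1 \<le> g (T p) (T q)"
    and N_pos: "N \<noteq> 0"
    and transitive: "N_transitive N g"
    and meir_keeler:
      "\<forall>\<epsilon>>0. \<exists>\<delta>>0. \<forall>p q. \<epsilon> \<le> r p q \<and> r p q < \<epsilon> + \<delta> \<longrightarrow> g p q * r (T p) (T q) < \<epsilon>"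
begin

lemma r_self [simp]: "r p p = 0"
  by (simp add: r_eq_0_iff)

lemma r_nonneg: "0 \<le> r p q"
  using r_triangle[of p p q] by (simp add: r_sym[of q p])

lemma r_le_weighted: "1 \<le> g p q \<Longrightarrow> r (T p) (T q) \<le> g p q * r (T p) (T q)"
  using r_nonneg[of "T p" "T q"] by (simp add: mult_le_cancel_right1)

lemma contractive:
  assumes "1 \<le> g p q" "p \<noteq> q"
  shows "r (T p) (T q) < r p q"
proof -
  have "0 < r p q"
    using assms(2) r_nonneg[of p q] r_eq_0_iff[of p q] by linarith
  then obtain \<delta> where "\<forall>p' q'. r p q \<le> r p' q' \<and> r p' q' < r p q + \<delta> \<longrightarrow>
      g p' q' * r (T p') (T q') < r p q" and "0 < \<delta>"
    using meir_keeler by blast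
  then have "g p q * r (T p) (T q) < r p q" by auto
  with r_le_weighted[OF assms(1)] show ?thesis by linarith
qed

lemma nonexpansive: "1 \<le> g p q \<Longrightarrow> r (T p) (T q) \<le> r p q"
  using contractive[of p q] by (cases "p = q") auto

lemma meir_keeler_step:
  assumes "1 \<le> g p q"
    and mk: "\<forall>p q. \<epsilon> \<le> r p q \<and> r p q < \<epsilon> + \<delta> \<longrightarrow> g p q * r (T p) (T q) < \<epsilon>"
    and "r p q < \<epsilon> + \<delta>"
  shows "r (T p) (T q) < \<epsilon>"
proof (cases "\<epsilon> \<le> r p q")
  case True
  with assms have "g p q * r (T p) (T q) < \<epsilon>" by blast
  with r_le_weighted[OF assms(1)] show ?thesis by linarith
next
  case False
  with nonexpansive[OF assms(1)] show ?thesis by linarith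
qed

lemma admissible_funpow: "1 \<le> g p q \<Longrightarrow> 1 \<le> g ((T ^^ k) p) ((T ^^ k) q)"
  by (induction k) (auto intro: admissible)

lemma decseq_r_funpow: "1 \<le> g p q \<Longrightarrow> decseq (\<lambda>k. r ((T ^^ k) p) ((T ^^ k) q))"
  unfolding decseq_Suc_iff by (simp add: nonexpansive admissible_funpow)

lemma r_funpow_tendsto_0:
  assumes g: "1 \<le> g p q"
  shows "(\<lambda>k. r ((T ^^ k) p) ((T ^^ k) q)) \<longlonglongrightarrow> 0"
proof -
  define e where "e = (\<lambda>k. r ((T ^^ k) p) ((T ^^ k) q))"
  obtain L where L: "e \<longlonglongrightarrow> L" "\<And>k. L \<le> e k"
    using decseq_convergent[OF decseq_r_funpow[OF g]] r_nonneg unfolding e_def by blast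
  \<comment> \<open>a positive limit \<open>L\<close> is impossible: once \<open>e k < L + \<delta>(L)\<close>, the next term drops below \<open>L\<close>\<close>
  have "L = 0"
  proof (rule ccontr)
    assume "L \<noteq> 0"
    moreover have "0 \<le> L"
      using LIMSEQ_le_const[OF L(1)] r_nonneg by (auto simp: e_def)
    ultimately have "0 < L" by simp
    then obtain \<delta> where "0 < \<delta>"
      and mk: "\<forall>p q. L \<le> r p q \<and> r p q < L + \<delta> \<longrightarrow> g p q * r (T p) (T q) < L"
      using meir_keeler by blast
    then obtain k where "e k < L + \<delta>"
      using order_tendstoD(2)[OF L(1), of "L + \<delta>"] unfolding eventually_sequentially by auto
    then have "e (Suc k) < L"
      using meir_keeler_step[OF admissible_funpow[OF g] mk] by (simp add: e_def)
    with L(2) show False by (simp add: not_le[symmetric])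
  qed
  with L(1) show ?thesis by (simp add: e_def)
qed

lemma admissible_orbit_Suc:
  assumes "1 \<le> g p0 (T p0)"
  shows "1 \<le> g ((T ^^ n) p0) ((T ^^ Suc n) p0)"
  using admissible_funpow[OF assms, of n] by (simp add: funpow_swap1)

lemma admissible_orbit_jump:
  assumes g0: "1 \<le> g p0 (T p0)"
  shows "1 \<le> g ((T ^^ n) p0) ((T ^^ (n + 1 + k * N)) p0)"
proof (induction k arbitrary: n)
  case 0
  show ?case using admissible_orbit_Suc[OF g0] by simp
next
  case (Suc k)
  \<comment> \<open>one jump of length \<open>1 + k * N\<close> followed by \<open>N\<close> single steps, closed up by \<open>N\<close>-transitivity\<close>
  define z where "z i = (if i = 0 then (T ^^ n) p0 else (T ^^ (n + k * N + i)) p0)" for i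
  have "1 \<le> g (z i) (z (Suc i))" if "i \<le> N" for i
    using Suc.IH[of n] admissible_orbit_Suc[OF g0, of "n + k * N + i"]
    by (cases "i = 0") (simp_all add: z_def ac_simps)
  then have "1 \<le> g (z 0) (z (N + 1))"
    using transitive unfolding N_transitive_def by blast
  then show ?case by (simp add: z_def algebra_simps)
qed

lemma r_le_steps:
  assumes "\<forall>n\<ge>M. r (x n) (x (Suc n)) \<le> \<eta>" "M \<le> c"
  shows "r (x c) (x (c + j)) \<le> real j * \<eta>"
proof (induction j)
  case (Suc j)
  have "r (x c) (x (c + Suc j)) \<le> r (x c) (x (c + j)) + r (x (c + j)) (x (Suc (c + j)))"
    using r_triangle by simp
  also have "\<dots> \<le> real j * \<eta> + \<eta>"
    using Suc assms by (intro add_mono) auto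
  finally show ?case by (simp add: algebra_simps)
qed simp

lemma orbit_jump_r_less:
  assumes g0: "1 \<le> g p0 (T p0)"
    and mk: "\<forall>p q. \<epsilon> \<le> r p q \<and> r p q < \<epsilon> + \<delta> \<longrightarrow> g p q * r (T p) (T q) < \<epsilon>"
    and steps: "\<forall>n\<ge>M. r ((T ^^ n) p0) ((T ^^ Suc n) p0) \<le> \<eta>"
    and small: "real N * \<eta> < \<delta>" and "0 < \<epsilon>" and "M \<le> a"
  shows "r ((T ^^ a) p0) ((T ^^ (a + 1 + k * N)) p0) < \<epsilon> + real N * \<eta>"
proof (induction k)
  case 0
  have "0 \<le> \<eta>" using steps r_nonneg order_trans by blast
  then have "\<eta> \<le> real N * \<eta>" using N_pos by (simp add: mult_le_cancel_right1)
  with steps \<open>M \<le> a\<close> \<open>0 < \<epsilon>\<close> show ?case by force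
next
  case (Suc k)
  \<comment> \<open>one Meir--Keeler step brings the jump below \<open>\<epsilon>\<close>; the remaining \<open>N - 1\<close> steps do not
    increase it, and walking \<open>N\<close> single steps from \<open>a\<close> adds at most \<open>N \<eta>\<close>\<close>
  let ?p = "\<lambda>n. (T ^^ n) p0"
  have "r (T (?p a)) (T (?p (a + 1 + k * N))) < \<epsilon>"
    using meir_keeler_step[OF admissible_orbit_jump[OF g0] mk] Suc.IH small by simp
  then have near: "r (?p (a + 1)) (?p (a + 1 + 1 + k * N)) < \<epsilon>" by simp
  have shift: "(T ^^ (N - 1)) (?p n) = ?p (N - 1 + n)" for n
    by (simp only: funpow_add o_apply)
  have idx: "N - 1 + (a + 1) = a + N" "N - 1 + (a + 1 + 1 + k * N) = a + N + 1 + k * N"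
    using N_pos by auto
  have "r ((T ^^ (N - 1)) (?p (a + 1))) ((T ^^ (N - 1)) (?p (a + 1 + 1 + k * N)))
      \<le> r (?p (a + 1)) (?p (a + 1 + 1 + k * N))"
    using decseq_r_funpow[OF admissible_orbit_jump[OF g0, of "a + 1" k]]
    unfolding decseq_def by (metis funpow_0 le0)
  then have far: "r (?p (a + N)) (?p (a + N + 1 + k * N)) < \<epsilon>"
    using near unfolding shift idx by linarith
  have "r (?p a) (?p (a + 1 + Suc k * N))
      \<le> r (?p a) (?p (a + N)) + r (?p (a + N)) (?p (a + N + 1 + k * N))"
    using r_triangle by (simp add: algebra_simps)
  also have "\<dots> < real N * \<eta> + \<epsilon>"
    using r_le_steps[OF steps \<open>M \<le> a\<close>, of N] far by simp
  finally show ?case by simp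
qed

lemma orbit_Cauchy:
  assumes g0: "1 \<le> g p0 (T p0)" and "0 < e"
  shows "\<exists>M. \<forall>m\<ge>M. \<forall>n\<ge>M. r ((T ^^ m) p0) ((T ^^ n) p0) < e"
proof -
  let ?p = "\<lambda>n. (T ^^ n) p0"
  obtain \<delta> where "0 < \<delta>"
    and mk: "\<forall>p q. e / 2 \<le> r p q \<and> r p q < e / 2 + \<delta> \<longrightarrow> g p q * r (T p) (T q) < e / 2"
    using meir_keeler \<open>0 < e\<close> by (meson half_gt_zero)
  \<comment> \<open>a gap \<open>b - a = 1 + k N + s\<close> with \<open>s < N\<close> costs at most \<open>e/2 + N \<eta> + s \<eta>\<close>\<close>
  define \<eta> where "\<eta> = min \<delta> (e / 2) / (2 * real N)"
  have "0 < \<eta>" using \<open>0 < \<delta>\<close> \<open>0 < e\<close> N_pos by (simp add: \<eta>_def)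
  have small: "real N * \<eta> < \<delta>" and total: "2 * (real N * \<eta>) \<le> e / 2"
    using N_pos \<open>0 < \<delta>\<close> by (auto simp: \<eta>_def)
  have "\<forall>\<^sub>F n in sequentially. r ((T ^^ n) p0) ((T ^^ n) (T p0)) < \<eta>"
    using order_tendstoD(2)[OF r_funpow_tendsto_0[OF g0] \<open>0 < \<eta>\<close>] .
  then obtain M where steps: "\<forall>n\<ge>M. r (?p n) (?p (Suc n)) \<le> \<eta>"
    unfolding eventually_sequentially by (metis funpow_swap1 funpow.simps(2) o_apply less_imp_le)
  have ordered: "r (?p a) (?p b) < e" if "M \<le> a" "a \<le> b" for a b
  proof (cases "a = b")
    case False
    define k where "k = (b - a - 1) div N"
    define s where "s = (b - a - 1) mod N"
    have b: "b = a + 1 + k * N + s" using False \<open>a \<le> b\<close> by (simp add: k_def s_def)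
    have "s < N" using N_pos by (simp add: s_def)
    have "r (?p a) (?p b) \<le> r (?p a) (?p (a + 1 + k * N)) + r (?p (a + 1 + k * N)) (?p b)"
      by (rule r_triangle)
    also have "\<dots> < (e / 2 + real N * \<eta>) + real s * \<eta>"
      using orbit_jump_r_less[OF g0 mk steps small _ \<open>M \<le> a\<close>, of k] \<open>0 < e\<close>
        r_le_steps[OF steps, of "a + 1 + k * N" s] b \<open>M \<le> a\<close>
      by (intro add_less_le_mono) auto
    also have "\<dots> \<le> e"
      using mult_strict_right_mono[of "real s" "real N" \<eta>] \<open>s < N\<close> \<open>0 < \<eta>\<close> total
      by linarith
    finally show ?thesis .
  qed (use \<open>0 < e\<close> in simp)
  show ?thesis
    by (metis ordered r_sym nle_le order_trans)
qed

lemma chain_funpow_tendsto_0: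
  assumes "gamma_chain g p q n c"
  shows "(\<lambda>k. r ((T ^^ k) p) ((T ^^ k) q)) \<longlonglongrightarrow> 0"
proof -
  have "(\<lambda>k. r ((T ^^ k) (c 0)) ((T ^^ k) (c j))) \<longlonglongrightarrow> 0" if "j \<le> n" for j
    using that
  proof (induction j)
    case (Suc j)
    have "1 \<le> g (c j) (c (Suc j)) \<or> 1 \<le> g (c (Suc j)) (c j)"
      using assms Suc.prems unfolding gamma_chain_def by force
    then have link: "(\<lambda>k. r ((T ^^ k) (c j)) ((T ^^ k) (c (Suc j)))) \<longlonglongrightarrow> 0"
      using r_funpow_tendsto_0[of "c j" "c (Suc j)"] r_funpow_tendsto_0[of "c (Suc j)" "c j"]
      by (auto simp: r_sym[of "(T ^^ _) (c (Suc j))"])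
    show ?case
      by (rule real_tendsto_sandwich[OF _ _ tendsto_const tendsto_add_zero[OF Suc.IH link]])
        (use Suc.prems in \<open>auto intro!: always_eventually r_nonneg r_triangle\<close>)
  qed simp
  from this[of n] assms show ?thesis unfolding gamma_chain_def by simp
qed

lemma connected_funpow_tendsto_0:
  assumes "gamma_connected g"
  shows "(\<lambda>k. r ((T ^^ k) p) ((T ^^ k) q)) \<longlonglongrightarrow> 0"
proof (cases "p = q")
  case False
  then obtain n c where "gamma_chain g p q n c"
    using assms unfolding gamma_connected_def by blast
  then show ?thesis by (rule chain_funpow_tendsto_0)
qed simp

lemma funpow_fixed_point: "T q = q \<Longrightarrow> (T ^^ k) q = q"
  by (induction k) simp_all

lemma fixed_point_unique:
  assumes "gamma_connected g" "T p = p" "T q = q"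
  shows "p = q"
proof -
  have "(\<lambda>k. r p q) \<longlonglongrightarrow> 0"
    using connected_funpow_tendsto_0[OF assms(1), of p q] by (simp add: funpow_fixed_point assms)
  then show ?thesis by (simp add: LIMSEQ_const_iff r_eq_0_iff)
qed

lemma fixed_point_of_orbit_limit:
  fixes s :: "nat \<Rightarrow> nat"
  assumes lim: "(\<lambda>n. r ((T ^^ n) p0) q) \<longlonglongrightarrow> 0"
    and "strict_mono s" and image_lim: "(\<lambda>k. r (T ((T ^^ s k) p0)) (T q)) \<longlonglongrightarrow> 0"
  shows "T q = q"
proof -
  have "strict_mono (Suc \<circ> s)"
    using \<open>strict_mono s\<close> by (simp add: strict_mono_def)
  from LIMSEQ_subseq_LIMSEQ[OF lim this]
  have "(\<lambda>k. r q (T ((T ^^ s k) p0))) \<longlonglongrightarrow> 0"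
    by (simp add: o_def r_sym)
  from tendsto_add_zero[OF this image_lim]
  have "r q (T q) \<le> 0"
    by (rule LIMSEQ_le_const) (auto intro: r_triangle)
  then show ?thesis using r_nonneg[of q "T q"] r_eq_0_iff[of q "T q"] by simp
qed

lemma fixed_point_of_admissible_orbit_limit:
  fixes s :: "nat \<Rightarrow> nat"
  assumes lim: "(\<lambda>n. r ((T ^^ n) p0) q) \<longlonglongrightarrow> 0"
    and "strict_mono s" and "\<And>k. 1 \<le> g ((T ^^ s k) p0) q"
  shows "T q = q"
proof (rule fixed_point_of_orbit_limit[OF lim \<open>strict_mono s\<close>])
  have sub: "(\<lambda>k. r ((T ^^ s k) p0) q) \<longlonglongrightarrow> 0"
    using LIMSEQ_subseq_LIMSEQ[OF lim \<open>strict_mono s\<close>] by (simp add: o_def)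
  show "(\<lambda>k. r (T ((T ^^ s k) p0)) (T q)) \<longlonglongrightarrow> 0"
    by (rule real_tendsto_sandwich[OF _ _ tendsto_const sub])
      (auto intro!: always_eventually r_nonneg nonexpansive assms(3))
qed

end

section \<open>Coupled fixed points\<close>

definition coupled_map :: "('a \<Rightarrow> 'a \<Rightarrow> 'a) \<Rightarrow> 'a \<times> 'a \<Rightarrow> 'a \<times> 'a" where
  "coupled_map F p = (F (fst p) (snd p), F (snd p) (fst p))"

definition coupled_dist :: "'a::metric_space \<times> 'a \<Rightarrow> 'a \<times> 'a \<Rightarrow> real" where
  "coupled_dist p q = (dist (fst p) (fst q) + dist (snd p) (snd q)) / 2"

definition coupled_alpha :: "('b \<times> 'b \<Rightarrow> 'b \<times> 'b \<Rightarrow> real) \<Rightarrow> 'b \<times> 'b \<Rightarrow> 'b \<times> 'b \<Rightarrow> real" where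
  "coupled_alpha \<alpha> p q = min (\<alpha> p q) (\<alpha> (prod.swap q) (prod.swap p))"

definition alpha_regular :: "('a::topological_space \<times> 'a \<Rightarrow> 'a \<times> 'a \<Rightarrow> real) \<Rightarrow> bool" where
  "alpha_regular \<alpha> \<longleftrightarrow>
     (\<forall>xs ys x y. xs \<longlonglongrightarrow> x \<and> ys \<longlonglongrightarrow> y \<and>
        (\<forall>n. \<alpha> (xs n, ys n) (xs (Suc n), ys (Suc n)) \<ge> 1 \<and>
             \<alpha> (ys (Suc n), xs (Suc n)) (ys n, xs n) \<ge> 1) \<longrightarrow>
        (\<exists>r :: nat \<Rightarrow> nat. strict_mono r \<and> (\<forall>k. \<alpha> (xs (r k), ys (r k)) (x, y) \<ge> 1 \<and>
                                     \<alpha> (y, x) (ys (r k), xs (r k)) \<ge> 1)))"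

lemma coupled_map_Pair [simp]: "coupled_map F (x, y) = (F x y, F y x)"
  by (simp add: coupled_map_def)

lemma coupled_dist_Pair [simp]: "coupled_dist (x, y) (u, v) = (dist x u + dist y v) / 2"
  by (simp add: coupled_dist_def)

lemma coupled_alpha_Pair [simp]:
  "coupled_alpha \<alpha> (x, y) (u, v) = min (\<alpha> (x, y) (u, v)) (\<alpha> (v, u) (y, x))"
  by (simp add: coupled_alpha_def)

lemma coupled_alpha_eq: "(\<lambda>(x, y) (u, v). min (\<alpha> (x, y) (u, v)) (\<alpha> (v, u) (y, x))) = coupled_alpha \<alpha>"
  by (simp add: fun_eq_iff)

lemma funpow_coupled_map: "(coupled_map F ^^ n) (x, y) = (F_iter F n x y, F_iter F n y x)"
  by (induction n) simp_all

lemma dist_le_coupled_dist: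
  "dist (fst p) (fst q) \<le> 2 * coupled_dist p q" "dist (snd p) (snd q) \<le> 2 * coupled_dist p q"
  by (simp_all add: coupled_dist_def)

lemma coupled_dist_tendsto_0_iff:
  "(\<lambda>n. coupled_dist (p n) q) \<longlonglongrightarrow> 0 \<longleftrightarrow>
     (\<lambda>n. fst (p n)) \<longlonglongrightarrow> fst q \<and> (\<lambda>n. snd (p n)) \<longlonglongrightarrow> snd q"
proof
  assume "(\<lambda>n. coupled_dist (p n) q) \<longlonglongrightarrow> 0"
  then have two: "(\<lambda>n. 2 * coupled_dist (p n) q) \<longlonglongrightarrow> 0"
    by (rule tendsto_mult_right_zero)
  have "(\<lambda>n. dist (fst (p n)) (fst q)) \<longlonglongrightarrow> 0" "(\<lambda>n. dist (snd (p n)) (snd q)) \<longlonglongrightarrow> 0"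
    by (rule real_tendsto_sandwich[OF _ _ tendsto_const two], simp_all add: dist_le_coupled_dist)+
  then show "(\<lambda>n. fst (p n)) \<longlonglongrightarrow> fst q \<and> (\<lambda>n. snd (p n)) \<longlonglongrightarrow> snd q"
    by (auto intro: tendsto_dist_iff[THEN iffD2])
next
  assume "(\<lambda>n. fst (p n)) \<longlonglongrightarrow> fst q \<and> (\<lambda>n. snd (p n)) \<longlonglongrightarrow> snd q"
  then have "(\<lambda>n. dist (fst (p n)) (fst q)) \<longlonglongrightarrow> 0" "(\<lambda>n. dist (snd (p n)) (snd q)) \<longlonglongrightarrow> 0"
    by (auto intro: tendsto_dist_iff[THEN iffD1])
  then show "(\<lambda>n. coupled_dist (p n) q) \<longlonglongrightarrow> 0"
    unfolding coupled_dist_def by (intro tendsto_divide_zero tendsto_add_zero)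
qed

lemma coupled_dist_Cauchy_convergent:
  fixes p :: "nat \<Rightarrow> 'a::complete_space \<times> 'a"
  assumes "\<And>e. 0 < e \<Longrightarrow> \<exists>M. \<forall>m\<ge>M. \<forall>n\<ge>M. coupled_dist (p m) (p n) < e"
  shows "\<exists>q. (\<lambda>n. coupled_dist (p n) q) \<longlonglongrightarrow> 0"
proof -
  have Cauchy: "Cauchy (\<lambda>n. f (p n))"
    if f: "\<And>a b. dist (f a) (f b) \<le> 2 * coupled_dist a b" for f :: "'a \<times> 'a \<Rightarrow> 'a"
  proof (rule metric_CauchyI)
    fix e :: real assume "0 < e"
    then obtain M where M: "\<forall>m\<ge>M. \<forall>n\<ge>M. coupled_dist (p m) (p n) < e / 2"
      using assms[of "e / 2"] by auto
    have "dist (f (p m)) (f (p n)) < e" if "M \<le> m" "M \<le> n" for m n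
      using M that f[of "p m" "p n"] by fastforce
    then show "\<exists>M. \<forall>m\<ge>M. \<forall>n\<ge>M. dist (f (p m)) (f (p n)) < e" by blast
  qed
  have "Cauchy (\<lambda>n. fst (p n))" "Cauchy (\<lambda>n. snd (p n))"
    by (rule Cauchy, rule dist_le_coupled_dist)+
  then obtain x y where "(\<lambda>n. fst (p n)) \<longlonglongrightarrow> x" "(\<lambda>n. snd (p n)) \<longlonglongrightarrow> y"
    by (meson Cauchy_convergent convergent_def)
  then show ?thesis
    using coupled_dist_tendsto_0_iff[of p "(x, y)"] by auto
qed

lemma N_transitive_coupled_alpha:
  assumes trans: "N_transitive N \<alpha>"
  shows "N_transitive N (coupled_alpha \<alpha>)"
  unfolding N_transitive_def
proof (intro allI impI)
  fix z assume steps: "\<forall>i\<le>N. 1 \<le> coupled_alpha \<alpha> (z i) (z (Suc i))"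
  then have "1 \<le> \<alpha> (z 0) (z (N + 1))"
    using trans unfolding N_transitive_def coupled_alpha_def by simp
  moreover
  \<comment> \<open>the second component of \<open>coupled_alpha\<close> sees the chain swapped and reversed\<close>
  define w where "w i = prod.swap (z (N + 1 - i))" for i
  have "1 \<le> \<alpha> (w i) (w (Suc i))" if "i \<le> N" for i
  proof -
    have "N + 1 - i = Suc (N - i)" "N + 1 - Suc i = N - i"
      using that by auto
    then show ?thesis
      using steps that unfolding w_def coupled_alpha_def by (metis diff_le_self min.bounded_iff)
  qed
  then have "1 \<le> \<alpha> (w 0) (w (N + 1))"
    using trans unfolding N_transitive_def by blast
  ultimately show "1 \<le> coupled_alpha \<alpha> (z 0) (z (N + 1))"
    by (simp add: coupled_alpha_def w_def)
qed

lemma coupled_alpha_admissible: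
  assumes "\<And>x y u v. 1 \<le> \<alpha> (x, y) (u, v) \<Longrightarrow> 1 \<le> \<alpha> (F x y, F y x) (F u v, F v u)"
    and "1 \<le> coupled_alpha \<alpha> p q"
  shows "1 \<le> coupled_alpha \<alpha> (coupled_map F p) (coupled_map F q)"
  using assms by (cases p; cases q) auto

lemma coupled_meir_keeler:
  assumes contr: "\<forall>\<epsilon>>0. \<exists>\<delta>>0. \<forall>x y u v.
      \<epsilon> \<le> (dist x u + dist y v) / 2 \<and> (dist x u + dist y v) / 2 < \<epsilon> + \<delta> \<longrightarrow>
      \<alpha> (x, y) (u, v) * dist (F x y) (F u v) < \<epsilon>"
  shows "\<forall>\<epsilon>>0. \<exists>\<delta>>0. \<forall>p q. \<epsilon> \<le> coupled_dist p q \<and> coupled_dist p q < \<epsilon> + \<delta> \<longrightarrow>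
      coupled_alpha \<alpha> p q * coupled_dist (coupled_map F p) (coupled_map F q) < \<epsilon>"
proof (intro allI impI)
  fix \<epsilon> :: real assume "0 < \<epsilon>"
  then obtain \<delta> where "0 < \<delta>" and \<delta>: "\<forall>x y u v.
      \<epsilon> \<le> (dist x u + dist y v) / 2 \<and> (dist x u + dist y v) / 2 < \<epsilon> + \<delta> \<longrightarrow>
      \<alpha> (x, y) (u, v) * dist (F x y) (F u v) < \<epsilon>"
    using contr by blast
  have "coupled_alpha \<alpha> p q * coupled_dist (coupled_map F p) (coupled_map F q) < \<epsilon>"
    if "\<epsilon> \<le> coupled_dist p q" "coupled_dist p q < \<epsilon> + \<delta>" for p q
  proof -
    obtain x y u v where pq: "p = (x, y)" "q = (u, v)" by fastforce
    let ?a = "\<alpha> (x, y) (u, v)" and ?b = "\<alpha> (v, u) (y, x)"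
    \<comment> \<open>the pairs \<open>((x, y), (u, v))\<close> and \<open>((v, u), (y, x))\<close> have the same average distance\<close>
    have a: "?a * dist (F x y) (F u v) < \<epsilon>" and b: "?b * dist (F y x) (F v u) < \<epsilon>"
      using \<delta>[rule_format, of x u y v] \<delta>[rule_format, of v y u x] that pq
      by (simp_all add: dist_commute add.commute)
    have "min ?a ?b * dist (F x y) (F u v) \<le> ?a * dist (F x y) (F u v)"
      "min ?a ?b * dist (F y x) (F v u) \<le> ?b * dist (F y x) (F v u)"
      by (simp_all add: mult_right_mono)
    moreover have "coupled_alpha \<alpha> p q * coupled_dist (coupled_map F p) (coupled_map F q)
        = (min ?a ?b * dist (F x y) (F u v) + min ?a ?b * dist (F y x) (F v u)) / 2"
      by (simp add: pq algebra_simps)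
    ultimately show ?thesis using a b by argo
  qed
  with \<open>0 < \<delta>\<close> show "\<exists>\<delta>>0. \<forall>p q. \<epsilon> \<le> coupled_dist p q \<and> coupled_dist p q < \<epsilon> + \<delta> \<longrightarrow>
      coupled_alpha \<alpha> p q * coupled_dist (coupled_map F p) (coupled_map F q) < \<epsilon>"
    by blast
qed

lemma alpha_meir_keeler_coupled:
  fixes F :: "'a::metric_space \<Rightarrow> 'a \<Rightarrow> 'a"
  assumes "N \<noteq> 0" and "N_transitive N \<alpha>"
    and "\<And>x y u v. 1 \<le> \<alpha> (x, y) (u, v) \<Longrightarrow> 1 \<le> \<alpha> (F x y, F y x) (F u v, F v u)"
    and "\<forall>\<epsilon>>0. \<exists>\<delta>>0. \<forall>x y u v.
      \<epsilon> \<le> (dist x u + dist y v) / 2 \<and> (dist x u + dist y v) / 2 < \<epsilon> + \<delta> \<longrightarrow>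
      \<alpha> (x, y) (u, v) * dist (F x y) (F u v) < \<epsilon>"
  shows "alpha_meir_keeler (coupled_map F) (coupled_alpha \<alpha>) coupled_dist N"
proof
  fix p q s :: "'a \<times> 'a"
  show "coupled_dist p q = coupled_dist q p"
    by (simp add: coupled_dist_def dist_commute)
  show "coupled_dist p s \<le> coupled_dist p q + coupled_dist q s"
    using dist_triangle[of "fst p" "fst s" "fst q"] dist_triangle[of "snd p" "snd s" "snd q"]
    unfolding coupled_dist_def by argo
  show "coupled_dist p q = 0 \<longleftrightarrow> p = q"
    by (simp add: coupled_dist_def add_nonneg_eq_0_iff prod_eq_iff)
next
  fix p q assume "1 \<le> coupled_alpha \<alpha> p q"
  with assms(3) show "1 \<le> coupled_alpha \<alpha> (coupled_map F p) (coupled_map F q)"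
    by (rule coupled_alpha_admissible)
qed (fact assms(1) N_transitive_coupled_alpha[OF assms(2)] coupled_meir_keeler[OF assms(4)])+

lemma coupled_orbit_convergent:
  fixes F :: "'a::complete_space \<Rightarrow> 'a \<Rightarrow> 'a"
  assumes "alpha_meir_keeler (coupled_map F) (coupled_alpha \<alpha>) coupled_dist N"
    and "1 \<le> coupled_alpha \<alpha> p0 (coupled_map F p0)"
  shows "\<exists>q. (\<lambda>n. coupled_dist ((coupled_map F ^^ n) p0) q) \<longlonglongrightarrow> 0"
proof -
  interpret alpha_meir_keeler "coupled_map F" "coupled_alpha \<alpha>" coupled_dist N by fact
  show ?thesis
    by (rule coupled_dist_Cauchy_convergent) (rule orbit_Cauchy[OF assms(2)])
qed

lemma coupled_orbit_limit_fixed_if_continuous: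
  fixes F :: "'a::metric_space \<Rightarrow> 'a \<Rightarrow> 'a"
  assumes "alpha_meir_keeler (coupled_map F) (coupled_alpha \<alpha>) coupled_dist N"
    and cont: "continuous_on UNIV (\<lambda>p. F (fst p) (snd p))"
    and lim: "(\<lambda>n. coupled_dist ((coupled_map F ^^ n) p0) q) \<longlonglongrightarrow> 0"
  shows "coupled_map F q = q"
proof -
  interpret alpha_meir_keeler "coupled_map F" "coupled_alpha \<alpha>" coupled_dist N by fact
  define P where "P n = (coupled_map F ^^ n) p0" for n
  have "(\<lambda>n. fst (P n)) \<longlonglongrightarrow> fst q" "(\<lambda>n. snd (P n)) \<longlonglongrightarrow> snd q"
    using coupled_dist_tendsto_0_iff[THEN iffD1, OF lim] by (simp_all add: P_def)
  then have "P \<longlonglongrightarrow> q" "(\<lambda>n. prod.swap (P n)) \<longlonglongrightarrow> prod.swap q"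
    using tendsto_Pair by (fastforce simp: prod.swap_def)+
  moreover have "isCont (\<lambda>p. F (fst p) (snd p)) z" for z
    using cont continuous_on_eq_continuous_at by blast
  ultimately have "(\<lambda>n. F (fst (P n)) (snd (P n))) \<longlonglongrightarrow> F (fst q) (snd q)"
      "(\<lambda>n. F (snd (P n)) (fst (P n))) \<longlonglongrightarrow> F (snd q) (fst q)"
    using isCont_tendsto_compose[of _ "\<lambda>p. F (fst p) (snd p)"] by fastforce+
  then have "(\<lambda>k. coupled_dist (coupled_map F (P (id k))) (coupled_map F q)) \<longlonglongrightarrow> 0"
    by (intro coupled_dist_tendsto_0_iff[THEN iffD2]) (simp add: coupled_map_def)
  then show ?thesis
    using fixed_point_of_orbit_limit[OF lim strict_mono_id] unfolding P_def by blast
qed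

lemma coupled_orbit_limit_fixed_if_regular:
  fixes F :: "'a::metric_space \<Rightarrow> 'a \<Rightarrow> 'a"
  assumes "alpha_meir_keeler (coupled_map F) (coupled_alpha \<alpha>) coupled_dist N"
    and "alpha_regular \<alpha>"
    and g0: "1 \<le> coupled_alpha \<alpha> p0 (coupled_map F p0)"
    and lim: "(\<lambda>n. coupled_dist ((coupled_map F ^^ n) p0) q) \<longlonglongrightarrow> 0"
  shows "coupled_map F q = q"
proof -
  interpret alpha_meir_keeler "coupled_map F" "coupled_alpha \<alpha>" coupled_dist N by fact
  define xs ys where "xs = (\<lambda>n. fst ((coupled_map F ^^ n) p0))"
    and "ys = (\<lambda>n. snd ((coupled_map F ^^ n) p0))"
  have P: "(coupled_map F ^^ n) p0 = (xs n, ys n)" for n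
    by (simp add: xs_def ys_def)
  have "xs \<longlonglongrightarrow> fst q" "ys \<longlonglongrightarrow> snd q"
    using coupled_dist_tendsto_0_iff[THEN iffD1, OF lim] by (simp_all add: xs_def ys_def)
  moreover have "1 \<le> coupled_alpha \<alpha> (xs n, ys n) (xs (Suc n), ys (Suc n))" for n
    using admissible_orbit_Suc[OF g0, of n] by (simp only: P)
  ultimately obtain s :: "nat \<Rightarrow> nat" where "strict_mono s"
    and "\<forall>k. 1 \<le> \<alpha> (xs (s k), ys (s k)) (fst q, snd q) \<and> 1 \<le> \<alpha> (snd q, fst q) (ys (s k), xs (s k))"
    using \<open>alpha_regular \<alpha>\<close> unfolding alpha_regular_def by force
  then show ?thesis
    by (intro fixed_point_of_admissible_orbit_limit[OF lim \<open>strict_mono s\<close>])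
      (simp add: P coupled_alpha_def prod.swap_def)
qed

lemma coupled_fixed_point_exists:
  fixes F :: "'a::complete_space \<Rightarrow> 'a \<Rightarrow> 'a"
  assumes MK: "alpha_meir_keeler (coupled_map F) (coupled_alpha \<alpha>) coupled_dist N"
    and g0: "1 \<le> coupled_alpha \<alpha> p0 (coupled_map F p0)"
    and "continuous_on UNIV (\<lambda>p. F (fst p) (snd p)) \<or> alpha_regular \<alpha>"
  shows "\<exists>q. coupled_map F q = q"
proof -
  obtain q where lim: "(\<lambda>n. coupled_dist ((coupled_map F ^^ n) p0) q) \<longlonglongrightarrow> 0"
    using coupled_orbit_convergent[OF MK g0] by blast
  from assms(3) have "coupled_map F q = q"
    using coupled_orbit_limit_fixed_if_continuous[OF MK _ lim]
      coupled_orbit_limit_fixed_if_regular[OF MK _ g0 lim] by blast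
  then show ?thesis ..
qed

lemma unique_coupled_fixed_point_diagonal:
  assumes "coupled_map F q = q" and unique: "\<And>p. coupled_map F p = p \<Longrightarrow> p = q"
  shows "snd q = fst q"
proof -
  obtain a b where ab: "q = (a, b)" by (cases q)
  have "coupled_map F (b, a) = (b, a)"
    using assms(1) by (simp add: ab)
  then have "(b, a) = q" by (rule unique)
  with ab show ?thesis by (metis fst_conv snd_conv)
qed

lemma F_iter_tendsto_fixed_point:
  assumes "alpha_meir_keeler (coupled_map F) (coupled_alpha \<alpha>) coupled_dist N"
    and conn: "gamma_connected (coupled_alpha \<alpha>)" and fixed: "F x x = x"
  shows "(\<lambda>n. F_iter F n u v) \<longlonglongrightarrow> x"
proof -
  interpret alpha_meir_keeler "coupled_map F" "coupled_alpha \<alpha>" coupled_dist N by fact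
  have "(\<lambda>n. coupled_dist ((coupled_map F ^^ n) (u, v)) (x, x)) \<longlonglongrightarrow> 0"
    using connected_funpow_tendsto_0[OF conn, of "(u, v)" "(x, x)"]
    by (simp add: funpow_fixed_point fixed)
  from coupled_dist_tendsto_0_iff[THEN iffD1, OF this] show ?thesis
    by (simp add: funpow_coupled_map)
qed

theorem corollary3:
  fixes F :: "'a::complete_space \<Rightarrow> 'a \<Rightarrow> 'a"
    and \<alpha> :: "('a \<times> 'a) \<Rightarrow> ('a \<times> 'a) \<Rightarrow> real"
    and N :: nat
  assumes N_pos: "N \<noteq> 0"
    and alpha_nonneg: "\<And>p q. \<alpha> p q \<ge> 0"
    and alpha_trans: "N_transitive N \<alpha>"
    and contr: "\<forall>\<epsilon>>0. \<exists>\<delta>>0. \<forall>x y u v.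
        \<epsilon> \<le> (dist x u + dist y v) / 2 \<and> (dist x u + dist y v) / 2 < \<epsilon> + \<delta> \<longrightarrow>
        \<alpha> (x, y) (u, v) * dist (F x y) (F u v) < \<epsilon>"
    and B1: "\<And>x y u v. \<alpha> (x, y) (u, v) \<ge> 1 \<Longrightarrow>
        \<alpha> (F x y, F y x) (F u v, F v u) \<ge> 1"
    and B2: "\<exists>x0 y0. \<alpha> (x0, y0) (F x0 y0, F y0 x0) \<ge> 1 \<and>
        \<alpha> (F y0 x0, F x0 y0) (y0, x0) \<ge> 1"
    and B34: "continuous_on UNIV (\<lambda>p. F (fst p) (snd p)) \<or>
        (\<forall>xs ys x y. xs \<longlonglongrightarrow> x \<and> ys \<longlonglongrightarrow> y \<and>
           (\<forall>n. \<alpha> (xs n, ys n) (xs (Suc n), ys (Suc n)) \<ge> 1 \<and>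
                \<alpha> (ys (Suc n), xs (Suc n)) (ys n, xs n) \<ge> 1) \<longrightarrow>
           (\<exists>r :: nat \<Rightarrow> nat. strict_mono r \<and> (\<forall>k. \<alpha> (xs (r k), ys (r k)) (x, y) \<ge> 1 \<and>
                                        \<alpha> (y, x) (ys (r k), xs (r k)) \<ge> 1)))"
    and B5: "gamma_connected (\<lambda>(x, y) (u, v). min (\<alpha> (x, y) (u, v)) (\<alpha> (v, u) (y, x)))"
  shows "\<exists>xs. (\<forall>x y. coupled_fixed_point F x y \<longleftrightarrow> x = xs \<and> y = xs) \<and>
              (\<forall>x. F x x = x \<longleftrightarrow> x = xs) \<and>
              (\<forall>x y. (\<lambda>n. F_iter F n x y) \<longlonglongrightarrow> xs)"
proof -
  have MK: "alpha_meir_keeler (coupled_map F) (coupled_alpha \<alpha>) coupled_dist N"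
    using N_pos alpha_trans B1 contr by (rule alpha_meir_keeler_coupled)
  interpret alpha_meir_keeler "coupled_map F" "coupled_alpha \<alpha>" coupled_dist N
    by (fact MK)
  obtain p0 where g0: "1 \<le> coupled_alpha \<alpha> p0 (coupled_map F p0)"
    using B2 by fastforce
  moreover have "continuous_on UNIV (\<lambda>p. F (fst p) (snd p)) \<or> alpha_regular \<alpha>"
    using B34 unfolding alpha_regular_def .
  ultimately obtain q where fixed: "coupled_map F q = q"
    using coupled_fixed_point_exists[OF MK] by blast
  have conn: "gamma_connected (coupled_alpha \<alpha>)"
    using B5 by (simp only: coupled_alpha_eq)
  have unique: "coupled_map F p = p \<longleftrightarrow> p = q" for p
    using fixed_point_unique[OF conn _ fixed] fixed by blast
  define x where "x = fst q"
  have q: "q = (x, x)"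
    using unique_coupled_fixed_point_diagonal[OF fixed] unique by (simp add: x_def prod_eq_iff)
  show ?thesis
  proof (intro exI[of _ x] conjI allI)
    show "coupled_fixed_point F u v \<longleftrightarrow> u = x \<and> v = x" for u v
      using unique[of "(u, v)"] by (simp add: coupled_fixed_point_def q)
    show "F u u = u \<longleftrightarrow> u = x" for u
      using unique[of "(u, u)"] by (simp add: q)
    show "(\<lambda>n. F_iter F n u v) \<longlonglongrightarrow> x" for u v
      using F_iter_tendsto_fixed_point[OF MK conn] fixed by (simp add: q)
  qed
qed

end
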